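(* Let $d,n\ge2$, $\gamma=[1^{(0)}\;2^{(0)}\;\ldots\;(n-1)^{(0)}][n^{(0)}]_{d-1}$, and for $i\in[n]$, $s\in\{0,\ldots,d-1\}$ let $R_i^{(s)}=\{u\in\mathcal{NC}_{G(d,d,n)}(\gamma):u(1^{(0)})=i^{(s)}\}$. Then $R_i^{(s)}$ is empty if and only if either $i=1$ and $2\le s<d$, or $2\le i<n$ and $1\le s<d-1$.
   Context: $G(d,d,n)$ is the group of $n\times n$ monomial matrices with $d$-th roots of unity as nonzero entries whose product is $1$, viewed as permutations of colored integers $k^{(s)}=\zeta^se_k$ ($\zeta=e^{2\pi i/d}$, $k\in[n]$, $s\in\mathbb{Z}/d$); products composed right to left. For $s\in[d-1]$ the balanced cycle $[k_1^{(t_1)}\ldots k_r^{(t_r)}]_s$ is the cycle $(k_1^{(t_1)}\ldots k_r^{(t_r)}\,k_1^{(t_1+s)}\ldots k_r^{(t_r+s)}\ldots k_1^{(t_1+(d-1)s)}\ldots k_r^{(t_r+(d-1)s)})$; subscript $1$ omitted. With $T$ the reflections, $\ell_T$ the absolute length, and $u\le_Tv$ iff $\ell_T(v)=\ell_T(u)+\ell_T(u^{-1}v)$, $\gamma$ is a Coxeter element and $\mathcal{NC}_{G(d,d,n)}(\gamma)=\{u:\varepsilon\le_Tu\le_T\gamma\}$. *)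

theory Defs
  imports Complex_Main "HOL-Combinatorics.Permutations"
begin

text \<open>Colored integers k^(s) are pairs (k, s) with k in [n] = {1..n} and s in {0..<d}
  (colors read modulo d).  Products compose right to left,
  i.e. the product u v is the function composition u o v.\<close>

definition cdom :: "nat \<Rightarrow> nat \<Rightarrow> (nat \<times> nat) set" where
  "cdom d n = {1..n} \<times> {0..<d}"

definition Gddn :: "nat \<Rightarrow> nat \<Rightarrow> ((nat \<times> nat) \<Rightarrow> (nat \<times> nat)) set" where
  "Gddn d n = {u. (\<forall>x. x \<notin> cdom d n \<longrightarrow> u x = x) \<and>
     (\<exists>(\<sigma>::nat\<Rightarrow>nat) (c::nat\<Rightarrow>nat). \<sigma> permutes {1..n} \<and> (\<Sum>k\<in>{1..n}. c k) mod d = (0::nat) \<and>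
        (\<forall>k\<in>{1..n}. \<forall>s<d. u (k, s) = (\<sigma> k, (s + c k) mod d)))}"

definition ginv :: "nat \<Rightarrow> nat \<Rightarrow> ((nat \<times> nat) \<Rightarrow> (nat \<times> nat)) \<Rightarrow> ((nat \<times> nat) \<Rightarrow> (nat \<times> nat))" where
  "ginv d n u = (\<lambda>x. if x \<in> cdom d n then inv_into (cdom d n) u x else x)"

text \<open>The monomial matrix of u (rows/columns indexed by 1..n): u(e_j) = zeta^(c_j) e_(sigma j),
  with zeta = exp(2 pi i / d).\<close>
definition zeta :: "nat \<Rightarrow> complex" where
  "zeta d = cis (2 * pi / real d)"

definition gmat :: "nat \<Rightarrow> ((nat \<times> nat) \<Rightarrow> (nat \<times> nat)) \<Rightarrow> nat \<Rightarrow> nat \<Rightarrow> complex" where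
  "gmat d u i j = (if fst (u (j, 0)) = i then zeta d ^ snd (u (j, 0)) else 0)"

text \<open>Reflections: elements g whose matrix M satisfies rank(M - I) = 1, i.e. M - I is a
  nonzero outer product v w^T (g fixes a hyperplane pointwise and g is not the identity).\<close>
definition reflections :: "nat \<Rightarrow> nat \<Rightarrow> ((nat \<times> nat) \<Rightarrow> (nat \<times> nat)) set" where
  "reflections d n = {g \<in> Gddn d n. \<exists>v w :: nat \<Rightarrow> complex.
      (\<exists>i\<in>{1..n}. v i \<noteq> 0) \<and> (\<exists>j\<in>{1..n}. w j \<noteq> 0) \<and>
      (\<forall>i\<in>{1..n}. \<forall>j\<in>{1..n}. gmat d g i j - (if i = j then 1 else 0) = v i * w j)}"

definition abs_len :: "nat \<Rightarrow> nat \<Rightarrow> ((nat \<times> nat) \<Rightarrow> (nat \<times> nat)) \<Rightarrow> nat" where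
  "abs_len d n u = (LEAST k. \<exists>ts. length ts = k \<and> set ts \<subseteq> reflections d n \<and>
                                  foldr (\<circ>) ts id = u)"

definition abs_le :: "nat \<Rightarrow> nat \<Rightarrow> ((nat \<times> nat) \<Rightarrow> (nat \<times> nat)) \<Rightarrow> ((nat \<times> nat) \<Rightarrow> (nat \<times> nat)) \<Rightarrow> bool" where
  "abs_le d n u v \<longleftrightarrow> abs_len d n v = abs_len d n u + abs_len d n (ginv d n u \<circ> v)"

text \<open>Balanced cycle [k_1^(t_1) ... k_r^(t_r)]_s, given as the list [(k_1,t_1),...,(k_r,t_r)]
  (the k_j distinct): k_j^(c) maps to k_(j+1)^(c - t_j + t_(j+1)) for j < r and
  k_r^(c) maps to k_1^(c - t_r + t_1 + s), colors mod d; all other points are fixed.\<close>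
definition bcycle :: "nat \<Rightarrow> nat \<Rightarrow> (nat \<times> nat) list \<Rightarrow> (nat \<times> nat) \<Rightarrow> (nat \<times> nat)" where
  "bcycle d s ks = (\<lambda>(k, c).
     if c < d \<and> (\<exists>j<length ks. fst (ks ! j) = k) then
       (let j = (LEAST j. j < length ks \<and> fst (ks ! j) = k) in
        if Suc j < length ks then
          (fst (ks ! Suc j),
           nat ((int c - int (snd (ks ! j)) + int (snd (ks ! Suc j))) mod int d))
        else
          (fst (ks ! 0),
           nat ((int c - int (snd (ks ! j)) + int (snd (ks ! 0)) + int s) mod int d)))
     else (k, c))"

definition gamma :: "nat \<Rightarrow> nat \<Rightarrow> (nat \<times> nat) \<Rightarrow> (nat \<times> nat)" where
  "gamma d n = bcycle d 1 (map (\<lambda>k. (k, 0)) [1..<n]) \<circ> bcycle d (d - 1) [(n, 0)]"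

definition NC :: "nat \<Rightarrow> nat \<Rightarrow> ((nat \<times> nat) \<Rightarrow> (nat \<times> nat)) set" where
  "NC d n = {u \<in> Gddn d n. abs_le d n id u \<and> abs_le d n u (gamma d n)}"

definition Rset :: "nat \<Rightarrow> nat \<Rightarrow> nat \<Rightarrow> nat \<Rightarrow> ((nat \<times> nat) \<Rightarrow> (nat \<times> nat)) set" where
  "Rset d n i s = {u \<in> NC d n. u (1, 0) = (i, s)}"

end

theory Submission
  imports Defs "Jordan_Normal_Form.Determinant"
begin

text \<open>Every element of $G(d,d,n)$ acts on $\mathbb{C}^n$ through its monomial matrix, and a
  reflection \<open>t\<close> acts as \<open>x \<mapsto> x + w\<^sub>t(x) v\<^sub>t\<close> for a linear form \<open>w\<^sub>t\<close>.  Since \<open>\<gamma>\<close> fixes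
  no nonzero vector, the forms of the \<open>n\<close> reflections of a reduced factorization
  \<open>\<gamma> = t\<^sub>1 \<cdots> t\<^sub>n\<close> are linearly independent.  Hence for \<open>u = t\<^sub>1 \<cdots> t\<^sub>k \<le>\<^sub>T \<gamma>\<close> we can write
  \<open>e\<^sub>1 = z + y\<close> with \<open>z\<close> killed by the forms of \<open>t\<^sub>1, \<dots>, t\<^sub>k\<close> and \<open>y\<close> by the others, so that
  \<open>u z = z\<close> and \<open>u y = \<gamma> y\<close>.  If \<open>u\<close> sends \<open>1^(0)\<close> to \<open>i^(s)\<close>, this gives
  \<open>\<zeta>\<^sup>s e\<^sub>i = u e\<^sub>1 = \<gamma> y + e\<^sub>1 - y\<close> and \<open>z\<^sub>i = \<zeta>\<^sup>s z\<^sub>1\<close>; since \<open>\<gamma>\<close> shifts coordinates cyclically,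
  these equations have no solution in the two forbidden ranges.  In every other case an
  explicit reduced factorization of \<open>\<gamma>\<close> begins with a prefix sending \<open>1^(0)\<close> to \<open>i^(s)\<close>.\<close>

lemma zeta_pow_self: "0 < d \<Longrightarrow> zeta d ^ d = 1"
  unfolding zeta_def by (simp add: DeMoivre)

lemma zeta_pow_mod:
  assumes "0 < d"
  shows "zeta d ^ (a mod d) = zeta d ^ a"
proof -
  have "zeta d ^ a = zeta d ^ (d * (a div d) + a mod d)"
    by simp
  also have "\<dots> = (zeta d ^ d) ^ (a div d) * zeta d ^ (a mod d)"
    by (simp only: power_add power_mult)
  finally show ?thesis
    using zeta_pow_self[OF assms] by simp
qed

lemma zeta_pow_inj:
  assumes "a < d" "b < d" "zeta d ^ a = zeta d ^ b"
  shows "a = b"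
proof -
  have "bij_betw (\<lambda>k. cis (2 * pi * real k / real d)) {..<d} {z. z ^ d = 1}"
    by (rule bij_betw_roots_unity) (use assms in auto)
  then have "inj_on (\<lambda>k. cis (2 * pi * real k / real d)) {..<d}"
    by (rule bij_betw_imp_inj_on)
  moreover have "zeta d ^ k = cis (2 * pi * real k / real d)" for k
    unfolding zeta_def by (simp add: DeMoivre mult.commute mult.left_commute)
  ultimately show ?thesis
    using assms by (auto simp: inj_on_def)
qed

lemma zeta_pow_eq_1_iff:
  assumes "0 < d"
  shows "zeta d ^ a = 1 \<longleftrightarrow> d dvd a"
proof -
  have "zeta d ^ a = 1 \<longleftrightarrow> zeta d ^ (a mod d) = zeta d ^ 0"
    using zeta_pow_mod[OF assms] by simp
  also have "\<dots> \<longleftrightarrow> a mod d = 0"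
    using zeta_pow_inj[of "a mod d" d 0] assms by auto
  finally show ?thesis
    by auto
qed

lemma zeta_pow_ne_1: "0 < a \<Longrightarrow> a < d \<Longrightarrow> zeta d ^ a \<noteq> 1"
  using zeta_pow_eq_1_iff[of d a] nat_dvd_not_less by auto

section \<open>Monomial description of $G(d,d,n)$\<close>

definition monomial_perm ::
  "nat \<Rightarrow> nat \<Rightarrow> (nat \<Rightarrow> nat) \<Rightarrow> (nat \<Rightarrow> nat) \<Rightarrow> nat \<times> nat \<Rightarrow> nat \<times> nat" where
  "monomial_perm d n \<sigma> c =
     (\<lambda>(k, s). if k \<in> {1..n} \<and> s < d then (\<sigma> k, (s + c k) mod d) else (k, s))"

lemma monomial_perm_apply [simp]:
  "k \<in> {1..n} \<Longrightarrow> s < d \<Longrightarrow> monomial_perm d n \<sigma> c (k, s) = (\<sigma> k, (s + c k) mod d)"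
  by (simp add: monomial_perm_def)

lemma monomial_perm_apply_outside:
  "\<not> (k \<in> {1..n} \<and> s < d) \<Longrightarrow> monomial_perm d n \<sigma> c (k, s) = (k, s)"
  by (auto simp: monomial_perm_def)

lemma monomial_perm_in_Gddn:
  assumes "\<sigma> permutes {1..n}" "(\<Sum>k\<in>{1..n}. c k) mod d = 0"
  shows "monomial_perm d n \<sigma> c \<in> Gddn d n"
proof -
  have "\<forall>x. x \<notin> cdom d n \<longrightarrow> monomial_perm d n \<sigma> c x = x"
    by (auto simp: cdom_def monomial_perm_def)
  moreover have "\<forall>k\<in>{1..n}. \<forall>s<d. monomial_perm d n \<sigma> c (k, s) = (\<sigma> k, (s + c k) mod d)"
    by simp
  ultimately show ?thesis
    using assms unfolding Gddn_def mem_Collect_eq by (intro conjI exI[of _ \<sigma>] exI[of _ c]) simp_all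
qed

lemma GddnE:
  assumes "g \<in> Gddn d n"
  obtains \<sigma> c where "\<sigma> permutes {1..n}" "(\<Sum>k\<in>{1..n}. c k) mod d = 0"
    "g = monomial_perm d n \<sigma> c"
proof -
  obtain \<sigma> c where \<sigma>: "\<sigma> permutes {1..n}" "(\<Sum>k\<in>{1..n}. c k) mod d = 0"
    and inside: "\<forall>k\<in>{1..n}. \<forall>s<d. g (k, s) = (\<sigma> k, (s + c k) mod d)"
    and outside: "\<forall>x. x \<notin> cdom d n \<longrightarrow> g x = x"
    using assms unfolding Gddn_def mem_Collect_eq by (elim conjE exE) metis
  have "g = monomial_perm d n \<sigma> c"
  proof
    fix x :: "nat \<times> nat"
    show "g x = monomial_perm d n \<sigma> c x"
      using inside outside by (cases x) (auto simp: monomial_perm_def cdom_def)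
  qed
  with \<sigma> show ?thesis
    by (rule that)
qed

lemma Gddn_apply_outside: "g \<in> Gddn d n \<Longrightarrow> x \<notin> cdom d n \<Longrightarrow> g x = x"
  unfolding Gddn_def by blast

lemma Gddn_maps_cdom:
  assumes "u \<in> Gddn d n" "x \<in> cdom d n"
  shows "u x \<in> cdom d n"
proof -
  obtain \<sigma> c where "\<sigma> permutes {1..n}" "u = monomial_perm d n \<sigma> c"
    using assms(1) by (rule GddnE)
  then show ?thesis
    using assms(2) permutes_in_image by (cases x) (fastforce simp: cdom_def)
qed

lemma monomial_perm_comp:
  assumes "0 < d" "\<forall>k\<in>{1..n}. \<sigma>' k \<in> {1..n}"
  shows "monomial_perm d n \<sigma> c \<circ> monomial_perm d n \<sigma>' c' =
         monomial_perm d n (\<sigma> \<circ> \<sigma>') (\<lambda>k. c' k + c (\<sigma>' k))"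
proof
  fix x :: "nat \<times> nat"
  obtain k s where x: "x = (k, s)"
    by (cases x)
  show "(monomial_perm d n \<sigma> c \<circ> monomial_perm d n \<sigma>' c') x =
        monomial_perm d n (\<sigma> \<circ> \<sigma>') (\<lambda>k. c' k + c (\<sigma>' k)) x"
    using assms unfolding x
    by (cases "k \<in> {1..n} \<and> s < d")
      (auto simp: monomial_perm_apply_outside mod_add_left_eq add.assoc)
qed

lemma monomial_perm_cong:
  assumes "\<forall>k\<in>{1..n}. \<sigma> k = \<sigma>' k \<and> c k mod d = c' k mod d"
  shows "monomial_perm d n \<sigma> c = monomial_perm d n \<sigma>' c'"
proof
  fix x :: "nat \<times> nat"
  obtain k s where x: "x = (k, s)"
    by (cases x)
  show "monomial_perm d n \<sigma> c x = monomial_perm d n \<sigma>' c' x"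
  proof (cases "k \<in> {1..n} \<and> s < d")
    case True
    then have "(s + c k) mod d = (s + c' k) mod d"
      using assms by (metis mod_add_right_eq)
    then show ?thesis
      using True assms unfolding x by simp
  qed (simp add: x monomial_perm_apply_outside)
qed

lemma monomial_perm_id: "monomial_perm d n (\<lambda>k. k) (\<lambda>k. 0) = id"
  by (auto simp: monomial_perm_def)

lemma monomial_perm_eq_id:
  "\<forall>k\<in>{1..n}. \<sigma> k = k \<and> c k mod d = 0 \<Longrightarrow> monomial_perm d n \<sigma> c = id"
  using monomial_perm_cong[of n \<sigma> "\<lambda>k. k" c d "\<lambda>k. 0"] by (simp add: monomial_perm_id)

lemma id_in_Gddn: "id \<in> Gddn d n"
  using monomial_perm_in_Gddn[of "\<lambda>k. k" n "\<lambda>k. 0" d]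
  by (simp add: monomial_perm_id permutes_id[unfolded id_def])

lemma Gddn_comp:
  assumes "0 < d" "g \<in> Gddn d n" "h \<in> Gddn d n"
  shows "g \<circ> h \<in> Gddn d n"
proof -
  obtain \<sigma> c where g: "\<sigma> permutes {1..n}" "(\<Sum>k\<in>{1..n}. c k) mod d = 0"
    "g = monomial_perm d n \<sigma> c"
    using assms(2) by (rule GddnE)
  obtain \<sigma>' c' where h: "\<sigma>' permutes {1..n}" "(\<Sum>k\<in>{1..n}. c' k) mod d = 0"
    "h = monomial_perm d n \<sigma>' c'"
    using assms(3) by (rule GddnE)
  have "(\<Sum>k\<in>{1..n}. c (\<sigma>' k)) = (\<Sum>k\<in>{1..n}. c k)"
    using sum.permute[OF h(1), of c] by (simp add: comp_def)
  then have sum: "(\<Sum>k\<in>{1..n}. c' k + c (\<sigma>' k)) mod d = 0"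
    using g(2) h(2) by (simp add: sum.distrib mod_add_eq[symmetric])
  have maps: "\<forall>k\<in>{1..n}. \<sigma>' k \<in> {1..n}"
    using permutes_in_image[OF h(1)] by blast
  show ?thesis
    unfolding g(3) h(3) monomial_perm_comp[OF assms(1) maps]
    by (rule monomial_perm_in_Gddn[OF permutes_compose[OF h(1) g(1)] sum])
qed

lemma foldr_comp_in_Gddn:
  "0 < d \<Longrightarrow> set ts \<subseteq> Gddn d n \<Longrightarrow> foldr (\<circ>) ts id \<in> Gddn d n"
  by (induction ts) (auto simp: id_in_Gddn Gddn_comp)

text \<open>Multiplying the colours by \<open>d - 1\<close> negates them modulo \<open>d\<close> and keeps their sum divisible
  by \<open>d\<close>.\<close>

lemma monomial_perm_inverse:
  assumes "0 < d" "\<sigma> permutes {1..n}"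
  shows "monomial_perm d n (inv_into UNIV \<sigma>) (\<lambda>k. (d - 1) * c (inv_into UNIV \<sigma> k)) \<circ>
      monomial_perm d n \<sigma> c = id"
    and "monomial_perm d n \<sigma> c \<circ>
      monomial_perm d n (inv_into UNIV \<sigma>) (\<lambda>k. (d - 1) * c (inv_into UNIV \<sigma> k)) = id"
proof -
  have d: "(d - 1) * a + a = d * a" for a
    using assms(1) by (simp add: algebra_simps)
  show "monomial_perm d n (inv_into UNIV \<sigma>) (\<lambda>k. (d - 1) * c (inv_into UNIV \<sigma> k)) \<circ>
      monomial_perm d n \<sigma> c = id"
    using assms d permutes_in_image[OF assms(2)] permutes_inverses[OF assms(2)]
    by (simp add: monomial_perm_comp monomial_perm_eq_id add.commute)
  show "monomial_perm d n \<sigma> c \<circ>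
      monomial_perm d n (inv_into UNIV \<sigma>) (\<lambda>k. (d - 1) * c (inv_into UNIV \<sigma> k)) = id"
    using assms d permutes_in_image[OF permutes_inv[OF assms(2)]] permutes_inverses[OF assms(2)]
    by (simp add: monomial_perm_comp monomial_perm_eq_id)
qed

lemma Gddn_inverse_exists:
  assumes "0 < d" "g \<in> Gddn d n"
  obtains h where "h \<in> Gddn d n" "h \<circ> g = id" "g \<circ> h = id"
proof -
  obtain \<sigma> c where g: "\<sigma> permutes {1..n}" "(\<Sum>k\<in>{1..n}. c k) mod d = 0"
    "g = monomial_perm d n \<sigma> c"
    using assms(2) by (rule GddnE)
  have "(\<Sum>k\<in>{1..n}. (d - 1) * c (inv_into UNIV \<sigma> k)) = (d - 1) * (\<Sum>k\<in>{1..n}. c k)"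
    using sum.permute[OF permutes_inv[OF g(1)], of c] by (simp add: comp_def sum_distrib_left)
  then have "(\<Sum>k\<in>{1..n}. (d - 1) * c (inv_into UNIV \<sigma> k)) mod d = 0"
    using g(2) by (simp add: mod_mult_right_eq[symmetric])
  then have "monomial_perm d n (inv_into UNIV \<sigma>) (\<lambda>k. (d - 1) * c (inv_into UNIV \<sigma> k)) \<in> Gddn d n"
    by (rule monomial_perm_in_Gddn[OF permutes_inv[OF g(1)]])
  then show ?thesis
    using that monomial_perm_inverse[OF assms(1) g(1), of c] unfolding g(3) by blast
qed

lemma ginv_eq:
  assumes "g \<in> Gddn d n" "h \<in> Gddn d n" "h \<circ> g = id" "g \<circ> h = id"
  shows "ginv d n g = h"
proof
  fix x
  have hg: "h (g y) = y" and gh: "g (h y) = y" for y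
    using assms(3,4) by (metis comp_apply id_apply)+
  show "ginv d n g x = h x"
  proof (cases "x \<in> cdom d n")
    case True
    have "h x \<in> cdom d n"
      using True Gddn_apply_outside[OF assms(1)] gh by metis
    moreover have "inj_on g (cdom d n)"
      by (metis hg inj_onI)
    ultimately show ?thesis
      using True gh[of x] inv_into_f_f[of g "cdom d n" "h x"] by (simp add: ginv_def)
  next
    case False
    then show ?thesis
      using Gddn_apply_outside[OF assms(2)] by (simp add: ginv_def)
  qed
qed

lemma ginv_Gddn:
  assumes "0 < d" "g \<in> Gddn d n"
  shows "ginv d n g \<in> Gddn d n" "ginv d n g \<circ> g = id" "g \<circ> ginv d n g = id"
  using Gddn_inverse_exists[OF assms] ginv_eq[OF assms(2)] by metis+

lemma gmat_monomial_perm: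
  "0 < d \<Longrightarrow> j \<in> {1..n} \<Longrightarrow>
    gmat d (monomial_perm d n \<sigma> c) i j = (if \<sigma> j = i then zeta d ^ c j else 0)"
  by (simp add: gmat_def zeta_pow_mod)

definition col_transp :: "nat \<Rightarrow> nat \<Rightarrow> nat \<Rightarrow> nat \<Rightarrow> nat \<Rightarrow> nat \<times> nat \<Rightarrow> nat \<times> nat" where
  "col_transp d n a b t =
     monomial_perm d n (transpose a b) (\<lambda>k. if k = a then t else if k = b then d - t else 0)"

lemma col_transp_in_Gddn:
  assumes "a \<in> {1..n}" "b \<in> {1..n}" "a \<noteq> b" "t \<le> d"
  shows "col_transp d n a b t \<in> Gddn d n"
  unfolding col_transp_def
proof (rule monomial_perm_in_Gddn)
  show "transpose a b permutes {1..n}"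
    by (rule permutes_swap_id[OF assms(1,2)])
  have "(\<Sum>k\<in>{1..n}. if k = a then t else if k = b then d - t else 0) =
        (\<Sum>k\<in>{1..n}. (if k = a then t else 0) + (if k = b then d - t else 0))"
    using assms(3) by (intro sum.cong) auto
  also have "\<dots> = d"
    using assms by (simp add: sum.distrib)
  finally show "(\<Sum>k\<in>{1..n}. if k = a then t else if k = b then d - t else 0) mod d = 0"
    by simp
qed

lemma col_transp_in_reflections:
  assumes "0 < d" "a \<in> {1..n}" "b \<in> {1..n}" "a \<noteq> b" "t \<le> d"
  shows "col_transp d n a b t \<in> reflections d n"
proof -
  define v where "v i = (if i = b then zeta d ^ t else 0) - (if i = a then 1 else 0 :: complex)" for i
  define w where "w j = (if j = a then 1 else 0) - (if j = b then zeta d ^ (d - t) else 0 :: complex)"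
    for j
  have zeta: "zeta d ^ t * zeta d ^ (d - t) = 1"
    using assms by (simp add: power_add[symmetric] zeta_pow_self)
  have "gmat d (col_transp d n a b t) i j - (if i = j then 1 else 0) = v i * w j"
    if "j \<in> {1..n}" for i j
    using assms(4) zeta unfolding col_transp_def v_def w_def gmat_monomial_perm[OF assms(1) that]
    by (cases "j = a"; cases "j = b"; cases "i = a"; cases "i = b") (auto simp: transpose_def)
  moreover have "v a \<noteq> 0" "w a \<noteq> 0"
    using assms by (auto simp: v_def w_def)
  ultimately show ?thesis
    using col_transp_in_Gddn[OF assms(2-5)] assms(2) unfolding reflections_def mem_Collect_eq
    by (intro conjI exI[of _ v] exI[of _ w]) blast+
qed

lemma reflections_subset_Gddn: "reflections d n \<subseteq> Gddn d n"
  unfolding reflections_def by blast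

lemma col_transp_involutive:
  assumes "0 < d" "a \<in> {1..n}" "b \<in> {1..n}" "a \<noteq> b" "t \<le> d"
  shows "col_transp d n a b t \<circ> col_transp d n a b t = id"
proof -
  have maps: "\<forall>k\<in>{1..n}. transpose a b k \<in> {1..n}"
    using assms(2,3) by (auto simp: transpose_def)
  show ?thesis
    unfolding col_transp_def monomial_perm_comp[OF assms(1) maps]
    by (rule monomial_perm_eq_id) (use assms in \<open>auto simp: transpose_def\<close>)
qed

lemma col_transp_swaps:
  assumes "0 < d" "a \<in> {1..n}" "b \<in> {1..n}" "a \<noteq> b" "t < d"
  shows "col_transp d n a b t (a, 0) = (b, t)" and "col_transp d n a b t (b, t) = (a, 0)"
  using assms by (simp_all add: col_transp_def)

section \<open>The linear action on $\mathbb{C}^n$\<close>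

definition lin_act ::
  "nat \<Rightarrow> nat \<Rightarrow> (nat \<times> nat \<Rightarrow> nat \<times> nat) \<Rightarrow> (nat \<Rightarrow> complex) \<Rightarrow> nat \<Rightarrow> complex" where
  "lin_act d n g x = (\<lambda>i. \<Sum>j\<in>{1..n}. gmat d g i j * x j)"

lemma lin_act_monomial_perm:
  assumes "0 < d" "inj_on \<sigma> {1..n}" "j \<in> {1..n}"
  shows "lin_act d n (monomial_perm d n \<sigma> c) x (\<sigma> j) = zeta d ^ c j * x j"
proof -
  have "lin_act d n (monomial_perm d n \<sigma> c) x (\<sigma> j) =
        (\<Sum>j'\<in>{1..n}. if j' = j then zeta d ^ c j' * x j' else 0)"
    unfolding lin_act_def
    by (rule sum.cong) (use assms in \<open>auto simp: gmat_monomial_perm inj_on_eq_iff\<close>)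
  then show ?thesis
    using assms(3) by simp
qed

lemma lin_act_id: "i \<in> {1..n} \<Longrightarrow> lin_act d n id x i = x i"
proof -
  assume i: "i \<in> {1..n}"
  have "lin_act d n id x i = (\<Sum>j\<in>{1..n}. if j = i then x j else 0)"
    unfolding lin_act_def gmat_def by (rule sum.cong) auto
  then show ?thesis
    using i by simp
qed

lemma lin_act_comp:
  assumes "0 < d" "g \<in> Gddn d n" "h \<in> Gddn d n" "i \<in> {1..n}"
  shows "lin_act d n (g \<circ> h) x i = lin_act d n g (lin_act d n h x) i"
proof -
  obtain \<sigma> c where g: "\<sigma> permutes {1..n}" "g = monomial_perm d n \<sigma> c"
    using assms(2) by (rule GddnE)
  obtain \<sigma>' c' where h: "\<sigma>' permutes {1..n}" "h = monomial_perm d n \<sigma>' c'"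
    using assms(3) by (rule GddnE)
  have maps: "\<forall>k\<in>{1..n}. \<sigma>' k \<in> {1..n}"
    using permutes_in_image[OF h(1)] by blast
  have comp: "\<sigma> \<circ> \<sigma>' permutes {1..n}"
    by (rule permutes_compose[OF h(1) g(1)])
  obtain j where j: "j \<in> {1..n}" "i = \<sigma> (\<sigma>' j)"
    using assms(4) permutes_image[OF comp] by (metis comp_apply imageE)
  have "lin_act d n (g \<circ> h) x i = zeta d ^ (c' j + c (\<sigma>' j)) * x j"
    using lin_act_monomial_perm[OF assms(1) permutes_inj_on[OF comp] j(1)]
    unfolding g(2) h(2) monomial_perm_comp[OF assms(1) maps] j(2) by simp
  also have "\<dots> = zeta d ^ c (\<sigma>' j) * (zeta d ^ c' j * x j)"
    by (simp add: power_add)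
  also have "\<dots> = lin_act d n g (lin_act d n h x) i"
    using lin_act_monomial_perm[OF assms(1) permutes_inj_on[OF g(1)]] maps j
      lin_act_monomial_perm[OF assms(1) permutes_inj_on[OF h(1)] j(1)]
    unfolding g(2) h(2) by simp
  finally show ?thesis .
qed

lemma lin_act_add: "lin_act d n g (\<lambda>j. x j + y j) i = lin_act d n g x i + lin_act d n g y i"
  unfolding lin_act_def by (simp add: distrib_left sum.distrib)

lemma lin_act_cong: "(\<And>j. j \<in> {1..n} \<Longrightarrow> x j = y j) \<Longrightarrow> lin_act d n g x i = lin_act d n g y i"
  unfolding lin_act_def by (rule sum.cong) auto

text \<open>A reflection \<open>t\<close> has matrix \<open>I + v w\<^sup>T\<close>; \<open>refl_form d n t\<close> is the linear form \<open>w\<close>.\<close>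

definition refl_vectors ::
  "nat \<Rightarrow> nat \<Rightarrow> (nat \<times> nat \<Rightarrow> nat \<times> nat) \<Rightarrow> (nat \<Rightarrow> complex) \<times> (nat \<Rightarrow> complex)" where
  "refl_vectors d n t = (SOME p. (\<exists>i\<in>{1..n}. fst p i \<noteq> 0) \<and> (\<exists>j\<in>{1..n}. snd p j \<noteq> 0) \<and>
      (\<forall>i\<in>{1..n}. \<forall>j\<in>{1..n}. gmat d t i j - (if i = j then 1 else 0) = fst p i * snd p j))"

definition refl_form ::
  "nat \<Rightarrow> nat \<Rightarrow> (nat \<times> nat \<Rightarrow> nat \<times> nat) \<Rightarrow> (nat \<Rightarrow> complex) \<Rightarrow> complex" where
  "refl_form d n t x = (\<Sum>j\<in>{1..n}. snd (refl_vectors d n t) j * x j)"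

lemma refl_vectors_spec:
  assumes "t \<in> reflections d n" "i \<in> {1..n}" "j \<in> {1..n}"
  shows "gmat d t i j =
    (if i = j then 1 else 0) + fst (refl_vectors d n t) i * snd (refl_vectors d n t) j"
proof -
  obtain v w where "(\<exists>i\<in>{1..n}. v i \<noteq> 0) \<and> (\<exists>j\<in>{1..n}. w j \<noteq> 0) \<and>
      (\<forall>i\<in>{1..n}. \<forall>j\<in>{1..n}. gmat d t i j - (if i = j then 1 else 0) = v i * w j)"
    using assms(1) unfolding reflections_def by blast
  then have "\<exists>p. (\<exists>i\<in>{1..n}. fst p i \<noteq> 0) \<and> (\<exists>j\<in>{1..n}. snd p j \<noteq> 0) \<and>
      (\<forall>i\<in>{1..n}. \<forall>j\<in>{1..n}. gmat d t i j - (if i = j then 1 else 0) = fst p i * snd p j)"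
    by (intro exI[of _ "(v, w)"]) simp
  from someI_ex[OF this] have "gmat d t i j - (if i = j then 1 else 0) =
      fst (refl_vectors d n t) i * snd (refl_vectors d n t) j"
    using assms(2,3) unfolding refl_vectors_def by blast
  then show ?thesis
    by (simp add: diff_eq_eq add.commute)
qed

lemma lin_act_reflection:
  assumes "t \<in> reflections d n" "i \<in> {1..n}"
  shows "lin_act d n t x i = x i + fst (refl_vectors d n t) i * refl_form d n t x"
proof -
  have "lin_act d n t x i = (\<Sum>j\<in>{1..n}. (if i = j then x j else 0) +
          fst (refl_vectors d n t) i * (snd (refl_vectors d n t) j * x j))"
    unfolding lin_act_def
    by (rule sum.cong) (simp_all add: refl_vectors_spec[OF assms] algebra_simps)
  also have "\<dots> = x i + fst (refl_vectors d n t) i * refl_form d n t x"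
    using assms(2) unfolding refl_form_def by (simp add: sum.distrib sum_distrib_left)
  finally show ?thesis .
qed

lemma refl_form_diff: "refl_form d n t (\<lambda>k. x k - y k) = refl_form d n t x - refl_form d n t y"
  unfolding refl_form_def by (simp add: right_diff_distrib sum_subtractf)

lemma lin_act_foldr_fixed:
  assumes "0 < d" "set ts \<subseteq> reflections d n" "\<forall>t\<in>set ts. refl_form d n t x = 0" "i \<in> {1..n}"
  shows "lin_act d n (foldr (\<circ>) ts id) x i = x i"
  using assms(2-4)
proof (induction ts arbitrary: i)
  case Nil
  then show ?case
    using lin_act_id[of i n d x] by (simp add: id_def)
next
  case (Cons t ts)
  have t: "t \<in> reflections d n"
    using Cons.prems(1) by simp
  have IH: "lin_act d n (foldr (\<circ>) ts id) x j = x j" if "j \<in> {1..n}" for j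
    by (rule Cons.IH) (use Cons.prems that in auto)
  have "refl_form d n t (lin_act d n (foldr (\<circ>) ts id) x) = refl_form d n t x"
    unfolding refl_form_def by (rule sum.cong) (simp_all add: IH)
  then have form: "refl_form d n t (lin_act d n (foldr (\<circ>) ts id) x) = 0"
    using Cons.prems(2) by simp
  have G: "foldr (\<circ>) ts id \<in> Gddn d n"
    using Cons.prems(1) reflections_subset_Gddn by (intro foldr_comp_in_Gddn[OF assms(1)]) auto
  have "lin_act d n (foldr (\<circ>) (t # ts) id) x i = lin_act d n (t \<circ> foldr (\<circ>) ts id) x i"
    by (simp only: foldr.simps comp_apply)
  also have "\<dots> = lin_act d n t (lin_act d n (foldr (\<circ>) ts id) x) i"
    by (rule lin_act_comp[OF assms(1) subsetD[OF reflections_subset_Gddn t] G Cons.prems(3)])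
  also have "\<dots> = x i"
    using lin_act_reflection[OF t Cons.prems(3)] IH[OF Cons.prems(3)] form by simp
  finally show ?case .
qed

section \<open>Reflections generate $G(d,d,n)$\<close>

definition moved_points :: "nat \<Rightarrow> (nat \<times> nat \<Rightarrow> nat \<times> nat) \<Rightarrow> nat set" where
  "moved_points n u = {k \<in> {1..n}. u (k, 0) \<noteq> (k, 0)}"

lemma moved_points_col_transp_comp:
  assumes "0 < d" "a \<in> moved_points n u" "b \<in> moved_points n u"
  shows "moved_points n (col_transp d n a b t \<circ> u) \<subseteq> moved_points n u"
proof
  fix m
  assume m: "m \<in> moved_points n (col_transp d n a b t \<circ> u)"
  show "m \<in> moved_points n u"
  proof (rule ccontr)
    assume "m \<notin> moved_points n u"
    then have "u (m, 0) = (m, 0)" "m \<noteq> a" "m \<noteq> b"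
      using m assms(2,3) by (auto simp: moved_points_def)
    then show False
      using m assms(1) by (auto simp: moved_points_def col_transp_def)
  qed
qed

lemma moved_points_col_transp_comp_strict:
  assumes "0 < d" "u \<in> Gddn d n" "k \<in> {1..n}" "u (k, 0) = (j, e)" "j \<noteq> k"
  shows "moved_points n (col_transp d n k j e \<circ> u) \<subset> moved_points n u"
proof -
  obtain \<sigma> c where \<sigma>: "\<sigma> permutes {1..n}" "u = monomial_perm d n \<sigma> c"
    using assms(2) by (rule GddnE)
  have "(\<sigma> k, c k mod d) = (j, e)"
    using assms(1,3,4) by (simp add: \<sigma>(2))
  then have j: "\<sigma> k = j" "e < d" "j \<in> {1..n}"
    using assms(1,3) permutes_in_image[OF \<sigma>(1), of k] by auto
  have "\<sigma> j \<noteq> j"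
    using j(1) assms(5) permutes_inj[OF \<sigma>(1)] by (metis injD)
  then have "u (j, 0) \<noteq> (j, 0)"
    using assms(1) j(3) by (simp add: \<sigma>(2))
  then have moved: "k \<in> moved_points n u" "j \<in> moved_points n u"
    using assms(3-5) j(3) by (auto simp: moved_points_def)
  have "(col_transp d n k j e \<circ> u) (k, 0) = (k, 0)"
    using col_transp_swaps(2)[OF assms(1,3) j(3) assms(5)[symmetric] j(2)] assms(4) by simp
  then show ?thesis
    using moved_points_col_transp_comp[OF assms(1) moved] moved(1) by (auto simp: moved_points_def)
qed

lemma moved_points_ne_singleton:
  assumes "0 < d" "u \<in> Gddn d n"
  shows "moved_points n u \<noteq> {k}"
proof
  assume moved: "moved_points n u = {k}"
  obtain \<sigma> c where \<sigma>: "\<sigma> permutes {1..n}" "(\<Sum>k\<in>{1..n}. c k) mod d = 0"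
    "u = monomial_perm d n \<sigma> c"
    using assms(2) by (rule GddnE)
  have u: "u (l, 0) = (\<sigma> l, c l mod d)" if "l \<in> {1..n}" for l
    using that assms(1) by (simp add: \<sigma>(3))
  have "k \<in> moved_points n u"
    using moved by blast
  then have k: "k \<in> {1..n}" "u (k, 0) \<noteq> (k, 0)"
    by (simp_all add: moved_points_def)
  have fixed: "\<sigma> l = l \<and> c l mod d = 0" if "l \<in> {1..n}" "l \<noteq> k" for l
  proof -
    have "l \<notin> moved_points n u"
      using that(2) moved by blast
    then show ?thesis
      using u[OF that(1)] that(1) by (simp add: moved_points_def)
  qed
  have "\<sigma> k = k"
    using fixed[of "\<sigma> k"] permutes_in_image[OF \<sigma>(1), of k] permutes_inj[OF \<sigma>(1)] k(1)
    by (metis injD)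
  moreover have "(\<Sum>l\<in>{1..n}. c l mod d) = c k mod d"
    using fixed k(1) by (simp add: sum.remove)
  then have "c k mod d = 0"
    using \<sigma>(2) by (metis mod_mod_trivial mod_sum_eq)
  ultimately show False
    using k u by simp
qed

lemma moved_points_reduce:
  assumes "0 < d" "u \<in> Gddn d n" "moved_points n u \<noteq> {}"
  obtains ts where "set ts \<subseteq> reflections d n" "\<forall>t\<in>set ts. t \<circ> t = id"
    "moved_points n (foldr (\<circ>) ts id \<circ> u) \<subset> moved_points n u"
proof -
  have transp: "col_transp d n a b e \<in> reflections d n"
      "col_transp d n a b e \<circ> col_transp d n a b e = id"
    if "a \<in> {1..n}" "b \<in> {1..n}" "a \<noteq> b" "e \<le> d" for a b e
    using that col_transp_in_reflections[OF assms(1)] col_transp_involutive[OF assms(1)] by auto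
  obtain k where k: "k \<in> moved_points n u"
    using assms(3) by blast
  then have k1: "k \<in> {1..n}"
    by (simp add: moved_points_def)
  obtain j e where je: "u (k, 0) = (j, e)"
    by fastforce
  have "(j, e) \<in> cdom d n"
    using Gddn_maps_cdom[OF assms(2), of "(k, 0)"] k1 assms(1) je by (simp add: cdom_def)
  then have j: "j \<in> {1..n}" "e < d"
    by (auto simp: cdom_def)
  show ?thesis
  proof (cases "j = k")
    case False
    then show ?thesis
      using that[of "[col_transp d n k j e]"] transp[OF k1 j(1) False[symmetric]] j(2)
        moved_points_col_transp_comp_strict[OF assms(1,2) k1 je False]
      by simp
  next
    case True
    then have e: "0 < e"
      using k je by (auto simp: moved_points_def)
    obtain l where l: "l \<in> moved_points n u" "l \<noteq> k"
      using k moved_points_ne_singleton[OF assms(1,2), of k] by blast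
    then have l1: "l \<in> {1..n}"
      by (simp add: moved_points_def)
    define B where "B = col_transp d n k l (d - e)"
    define A where "A = col_transp d n k l 0"
    have BG: "B \<circ> u \<in> Gddn d n"
      using transp(1)[OF k1 l1 l(2)[symmetric], of "d - e"] reflections_subset_Gddn
      by (auto simp: B_def intro: Gddn_comp[OF assms(1) _ assms(2)])
    have "(B \<circ> u) (k, 0) = (l, 0)"
      using je True j e k1 l1 l(2) by (simp add: B_def col_transp_def)
    then have "moved_points n (A \<circ> (B \<circ> u)) \<subset> moved_points n (B \<circ> u)"
      unfolding A_def by (rule moved_points_col_transp_comp_strict[OF assms(1) BG k1 _ l(2)])
    also have "moved_points n (B \<circ> u) \<subseteq> moved_points n u"
      unfolding B_def by (rule moved_points_col_transp_comp[OF assms(1) k l(1)])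
    finally show ?thesis
      using that[of "[A, B]"] transp[OF k1 l1 l(2)[symmetric]] by (simp add: A_def B_def comp_assoc)
  qed
qed

lemma foldr_comp_append: "foldr (\<circ>) (xs @ ys) id = foldr (\<circ>) xs id \<circ> foldr (\<circ>) ys id"
  by (induction xs) (simp_all add: comp_assoc)

lemma foldr_rev_involutions:
  "\<forall>t\<in>set ts. t \<circ> t = id \<Longrightarrow> foldr (\<circ>) (rev ts) id \<circ> foldr (\<circ>) ts id = id"
proof (induction ts)
  case (Cons t ts)
  have tt: "t \<circ> t = id"
    using Cons.prems by (simp add: fun_eq_iff)
  have "foldr (\<circ>) (rev (t # ts)) id \<circ> foldr (\<circ>) (t # ts) id =
      foldr (\<circ>) (rev ts) id \<circ> (t \<circ> t) \<circ> foldr (\<circ>) ts id"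
    by (simp add: foldr_comp_append comp_assoc del: foldr_append)
  also have "\<dots> = foldr (\<circ>) (rev ts) id \<circ> foldr (\<circ>) ts id"
    by (simp only: tt comp_id)
  also have "\<dots> = id"
    by (rule Cons.IH) (use Cons.prems in \<open>simp add: fun_eq_iff\<close>)
  finally show ?case .
qed simp

lemma Gddn_reflection_factorization:
  assumes "0 < d" "u \<in> Gddn d n"
  obtains ts where "set ts \<subseteq> reflections d n" "foldr (\<circ>) ts id = u"
  using assms(2)
proof (induction "card (moved_points n u)" arbitrary: u thesis rule: less_induct)
  case less
  show ?case
  proof (cases "moved_points n u = {}")
    case True
    obtain \<sigma> c where \<sigma>: "u = monomial_perm d n \<sigma> c"
      using less.prems(2) by (rule GddnE)
    have "u = id"
      unfolding \<sigma> using True assms(1) by (intro monomial_perm_eq_id) (auto simp: moved_points_def \<sigma>)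
    then show ?thesis
      using less.prems(1)[of "[]"] by simp
  next
    case False
    then obtain ts where ts: "set ts \<subseteq> reflections d n" "\<forall>t\<in>set ts. t \<circ> t = id"
      "moved_points n (foldr (\<circ>) ts id \<circ> u) \<subset> moved_points n u"
      using moved_points_reduce[OF assms(1) less.prems(2)] by blast
    have "foldr (\<circ>) ts id \<circ> u \<in> Gddn d n"
      using ts(1) reflections_subset_Gddn
      by (intro Gddn_comp[OF assms(1) foldr_comp_in_Gddn[OF assms(1)] less.prems(2)]) auto
    moreover have "card (moved_points n (foldr (\<circ>) ts id \<circ> u)) < card (moved_points n u)"
      using ts(3) by (intro psubset_card_mono) (auto simp: moved_points_def)
    ultimately obtain vs where vs: "set vs \<subseteq> reflections d n" "foldr (\<circ>) vs id = foldr (\<circ>) ts id \<circ> u"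
      using less.hyps by blast
    have "foldr (\<circ>) (rev ts @ vs) id = (foldr (\<circ>) (rev ts) id \<circ> foldr (\<circ>) ts id) \<circ> u"
      by (simp only: foldr_comp_append vs(2) comp_assoc)
    also have "\<dots> = u"
      by (simp only: foldr_rev_involutions[OF ts(2)] id_comp)
    finally have "foldr (\<circ>) (rev ts @ vs) id = u" .
    then show ?thesis
      using less.prems(1)[of "rev ts @ vs"] ts(1) vs(1) by auto
  qed
qed

lemma abs_len_le:
  "set ts \<subseteq> reflections d n \<Longrightarrow> foldr (\<circ>) ts id = u \<Longrightarrow> abs_len d n u \<le> length ts"
  unfolding abs_len_def by (rule Least_le) blast

lemma abs_len_obtain:
  assumes "0 < d" "u \<in> Gddn d n"
  obtains ts where "length ts = abs_len d n u" "set ts \<subseteq> reflections d n" "foldr (\<circ>) ts id = u"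
proof -
  obtain ts where "set ts \<subseteq> reflections d n" "foldr (\<circ>) ts id = u"
    using Gddn_reflection_factorization[OF assms] .
  then have "\<exists>k ts. length ts = k \<and> set ts \<subseteq> reflections d n \<and> foldr (\<circ>) ts id = u"
    by blast
  from LeastI_ex[OF this] show ?thesis
    using that unfolding abs_len_def by blast
qed

lemma abs_len_id: "abs_len d n id = 0"
  using abs_len_le[of "[]" d n id] by simp

lemma abs_len_comp_le:
  assumes "0 < d" "u \<in> Gddn d n" "v \<in> Gddn d n"
  shows "abs_len d n (u \<circ> v) \<le> abs_len d n u + abs_len d n v"
proof -
  obtain us where "length us = abs_len d n u" "set us \<subseteq> reflections d n" "foldr (\<circ>) us id = u"
    using abs_len_obtain[OF assms(1,2)] .
  moreover obtain vs where "length vs = abs_len d n v" "set vs \<subseteq> reflections d n"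
    "foldr (\<circ>) vs id = v"
    using abs_len_obtain[OF assms(1,3)] .
  ultimately show ?thesis
    using abs_len_le[of "us @ vs" d n "u \<circ> v"] by (simp add: foldr_comp_append del: foldr_append)
qed

section \<open>Linear forms with trivial common kernel\<close>

definition forms_mat :: "nat \<Rightarrow> nat \<Rightarrow> (nat \<Rightarrow> nat \<Rightarrow> 'a::field) \<Rightarrow> 'a mat" where
  "forms_mat n m w = mat n n (\<lambda>(p, q). if p < m then w p (Suc q) else 0)"

lemma forms_mat_mult_vec:
  assumes "p < n" "dim_vec v = n"
  shows "(forms_mat n m w *\<^sub>v v) $ p =
    (if p < m then (\<Sum>q\<in>{1..n}. w p q * v $ (q - 1)) else 0)"
proof -
  have "(\<Sum>q\<in>{1..n}. w p q * v $ (q - 1)) = (\<Sum>q<n. w p (Suc q) * v $ q)"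
    using sum.atLeast1_atMost_eq[of "\<lambda>q. w p q * v $ (q - 1)" n] by simp
  then show ?thesis
    using assms by (simp add: forms_mat_def scalar_prod_def atLeast0LessThan)
qed

lemma det_forms_mat_nonzero:
  assumes "m \<le> n"
    and kernel: "\<And>x. \<forall>p<m. (\<Sum>q\<in>{1..n}. w p q * x q) = 0 \<Longrightarrow> \<forall>q\<in>{1..n}. x q = 0"
  shows "det (forms_mat n m w) \<noteq> 0"
proof
  assume "det (forms_mat n m w) = 0"
  then obtain v where v: "v \<in> carrier_vec n" "v \<noteq> 0\<^sub>v n" "forms_mat n m w *\<^sub>v v = 0\<^sub>v n"
    using det_0_iff_vec_prod_zero[of "forms_mat n m w" n] by (auto simp: forms_mat_def)
  have "\<forall>p<m. (\<Sum>q\<in>{1..n}. w p q * v $ (q - 1)) = 0"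
  proof (intro allI impI)
    fix p
    assume "p < m"
    then show "(\<Sum>q\<in>{1..n}. w p q * v $ (q - 1)) = 0"
      using forms_mat_mult_vec[of p n v m w] v(1,3) assms(1) by simp
  qed
  then have "\<forall>q\<in>{1..n}. v $ (q - 1) = 0"
    by (rule kernel)
  then have "v = 0\<^sub>v n"
    using v(1) by (intro eq_vecI) (auto dest!: bspec[of _ _ "Suc _"])
  with v(2) show False ..
qed

lemma trivial_kernel_forms_independent:
  fixes w :: "nat \<Rightarrow> nat \<Rightarrow> 'a::field"
  assumes "m \<le> n"
    and kernel: "\<And>x. \<forall>p<m. (\<Sum>q\<in>{1..n}. w p q * x q) = 0 \<Longrightarrow> \<forall>q\<in>{1..n}. x q = 0"
  shows "m = n \<and> (\<forall>r. \<exists>x. \<forall>p<m. (\<Sum>q\<in>{1..n}. w p q * x q) = r p)"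
proof -
  let ?B = "forms_mat n m w"
  have B: "?B \<in> carrier_mat n n"
    by (simp add: forms_mat_def)
  obtain C where C: "C \<in> carrier_mat n n" "?B * C = 1\<^sub>m n"
    using det_non_zero_imp_unit[OF B det_forms_mat_nonzero[OF assms]]
    unfolding Units_def ring_mat_def by auto
  have "m = n"
  proof (rule ccontr)
    assume "m \<noteq> n"
    then have last: "n - 1 < n" "\<not> n - 1 < m"
      using assms(1) by auto
    have "row ?B (n - 1) = 0\<^sub>v n"
      using last unfolding forms_mat_def by (intro eq_vecI) auto
    then have "(?B * C) $$ (n - 1, n - 1) = 0"
      using last C(1) B by (simp add: scalar_prod_def)
    moreover have "(?B * C) $$ (n - 1, n - 1) = 1"
      using C(2) last by simp
    ultimately show False
      by simp
  qed
  moreover have "\<exists>x. \<forall>p<m. (\<Sum>q\<in>{1..n}. w p q * x q) = r p" for r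
  proof (intro exI allI impI)
    fix p
    assume "p < m"
    have "?B *\<^sub>v (C *\<^sub>v vec n r) = (?B * C) *\<^sub>v vec n r"
      using assoc_mult_mat_vec[OF B C(1), of "vec n r"] by simp
    then have "(?B *\<^sub>v (C *\<^sub>v vec n r)) $ p = r p"
      using C(2) \<open>p < m\<close> assms(1) by simp
    then show "(\<Sum>q\<in>{1..n}. w p q * (C *\<^sub>v vec n r) $ (q - 1)) = r p"
      using forms_mat_mult_vec[of p n "C *\<^sub>v vec n r" m w] C(1) \<open>p < m\<close> assms(1) by simp
  qed
  ultimately show ?thesis
    by blast
qed

lemma factorization_forms_independent:
  assumes "0 < d" "set ts \<subseteq> reflections d n" "length ts \<le> n"
    and fixfree: "\<And>x. \<forall>k\<in>{1..n}. lin_act d n (foldr (\<circ>) ts id) x k = x k \<Longrightarrow> \<forall>k\<in>{1..n}. x k = 0"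
  shows "length ts = n \<and> (\<forall>r. \<exists>z. \<forall>j<length ts. refl_form d n (ts ! j) z = r j)"
proof -
  have "\<forall>q\<in>{1..n}. x q = 0"
    if "\<forall>p<length ts. (\<Sum>q\<in>{1..n}. snd (refl_vectors d n (ts ! p)) q * x q) = 0" for x
  proof (rule fixfree, intro ballI)
    fix k
    assume "k \<in> {1..n}"
    moreover have "\<forall>t\<in>set ts. refl_form d n t x = 0"
      using that unfolding refl_form_def by (metis in_set_conv_nth)
    ultimately show "lin_act d n (foldr (\<circ>) ts id) x k = x k"
      using lin_act_foldr_fixed[OF assms(1,2)] by blast
  qed
  from trivial_kernel_forms_independent[OF assms(3) this] show ?thesis
    unfolding refl_form_def .
qed

text \<open>\<open>shift_cycle a m\<close> is the cycle \<open>(a a+1 ... m)\<close>; \<open>cox_colour d n m\<close> are the colours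
  of the balanced cycle \<open>[a^(0) ... m^(0)][n^(0)]_(d-1)\<close> in the monomial description.\<close>

definition shift_cycle :: "nat \<Rightarrow> nat \<Rightarrow> nat \<Rightarrow> nat" where
  "shift_cycle a m k = (if a \<le> k \<and> k < m then Suc k else if k = m then a else k)"

definition cox_colour :: "nat \<Rightarrow> nat \<Rightarrow> nat \<Rightarrow> nat \<Rightarrow> nat" where
  "cox_colour d n m k = (if k = m then 1 else if k = n then d - 1 else 0)"

lemma shift_cycle_permutes:
  assumes "1 \<le> a" "a \<le> m" "m \<le> n"
  shows "shift_cycle a m permutes {1..n}"
proof (rule bij_imp_permutes)
  have inj: "inj_on (shift_cycle a m) {1..n}"
    using assms by (auto simp: inj_on_def shift_cycle_def split: if_splits)
  moreover have "shift_cycle a m ` {1..n} \<subseteq> {1..n}"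
    using assms by (auto simp: shift_cycle_def)
  ultimately show "bij_betw (shift_cycle a m) {1..n} {1..n}"
    by (simp add: bij_betw_def endo_inj_surj)
  show "shift_cycle a m k = k" if "k \<notin> {1..n}" for k
    using that assms by (auto simp: shift_cycle_def)
qed

lemma nat_mod_int: "nat (int a mod int d) = a mod d"
  by (metis nat_int zmod_int)

lemma bcycle_apply:
  assumes "c < d" "j < length ks" "fst (ks ! j) = k" "\<forall>j'<j. fst (ks ! j') \<noteq> k"
  shows "bcycle d s ks (k, c) = (if Suc j < length ks then
      (fst (ks ! Suc j), nat ((int c - int (snd (ks ! j)) + int (snd (ks ! Suc j))) mod int d))
    else (fst (ks ! 0), nat ((int c - int (snd (ks ! j)) + int (snd (ks ! 0)) + int s) mod int d)))"
proof -
  have least: "(LEAST j. j < length ks \<and> fst (ks ! j) = k) = j"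
    by (rule Least_equality) (use assms in \<open>auto simp: not_less[symmetric]\<close>)
  have "\<exists>j<length ks. fst (ks ! j) = k"
    using assms by blast
  then show ?thesis
    using assms(1) unfolding bcycle_def
    by (simp only: case_prod_conv least Let_def if_True simp_thms)
qed

lemma bcycle_apply_other:
  "\<not> (c < d \<and> (\<exists>j<length ks. fst (ks ! j) = k)) \<Longrightarrow> bcycle d s ks (k, c) = (k, c)"
  unfolding bcycle_def by (simp only: case_prod_conv if_False)

lemma bcycle_chain_apply:
  assumes "c < d" "1 \<le> k" "k < n"
  shows "bcycle d 1 (map (\<lambda>k. (k, 0)) [1..<n]) (k, c) =
    (if k < n - 1 then (Suc k, c) else (1, (c + 1) mod d))"
proof -
  let ?ks = "map (\<lambda>k. (k, 0::nat)) [1..<n]"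
  have nth: "j < n - 1 \<Longrightarrow> ?ks ! j = (Suc j, 0)" for j
    by simp
  have "bcycle d 1 ?ks (k, c) = (if Suc (k - 1) < length ?ks then
      (fst (?ks ! Suc (k - 1)),
       nat ((int c - int (snd (?ks ! (k - 1))) + int (snd (?ks ! Suc (k - 1)))) mod int d))
    else (fst (?ks ! 0),
       nat ((int c - int (snd (?ks ! (k - 1))) + int (snd (?ks ! 0)) + int 1) mod int d)))"
  proof (rule bcycle_apply)
    show "\<forall>j'<k - 1. fst (?ks ! j') \<noteq> k"
      using assms nth by auto
  qed (use assms in \<open>auto simp: nth\<close>)
  then show ?thesis
    using assms nat_mod_int[of c d] nat_mod_int[of "c + 1" d]
    by (cases "k < n - 1") (simp_all add: nth add.commute)
qed

lemma bcycle_singleton_apply: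
  assumes "c < d"
  shows "bcycle d (d - 1) [(n, 0)] (n, c) = (n, (c + (d - 1)) mod d)"
proof -
  have "bcycle d (d - 1) [(n, 0)] (n, c) = (n, nat ((int c + int (d - 1)) mod int d))"
    using bcycle_apply[of c d 0 "[(n, 0)]" n "d - 1"] assms by simp
  then show ?thesis
    using nat_mod_int[of "c + (d - 1)" d] by simp
qed

lemma gamma_eq_monomial_perm:
  assumes "2 \<le> d" "2 \<le> n"
  shows "gamma d n = monomial_perm d n (shift_cycle 1 (n - 1)) (cox_colour d n (n - 1))"
proof
  fix x :: "nat \<times> nat"
  obtain k c where x: "x = (k, c)"
    by (cases x)
  consider "c < d" "k \<in> {1..<n}" | "c < d" "k = n" | "\<not> (c < d \<and> k \<in> {1..n})"
    using assms by force
  then show "gamma d n x = monomial_perm d n (shift_cycle 1 (n - 1)) (cox_colour d n (n - 1)) x"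
  proof cases
    case 1
    then show ?thesis
      using assms bcycle_apply_other[of c d "[(n, 0)]" k "d - 1"] bcycle_chain_apply[of c d k n]
      unfolding gamma_def x by (auto simp: shift_cycle_def cox_colour_def)
  next
    case 2
    then show ?thesis
      using assms bcycle_singleton_apply[of c d n]
        bcycle_apply_other[of "(c + (d - 1)) mod d" d "map (\<lambda>k. (k, 0)) [1..<n]" n 1]
      unfolding gamma_def x by (auto simp: shift_cycle_def cox_colour_def)
  next
    case 3
    have "bcycle d (d - 1) [(n, 0)] (k, c) = (k, c)"
      by (rule bcycle_apply_other) (use 3 assms in auto)
    moreover have "bcycle d 1 (map (\<lambda>k. (k, 0)) [1..<n]) (k, c) = (k, c)"
      by (rule bcycle_apply_other) (use 3 assms in auto)
    moreover have "monomial_perm d n (shift_cycle 1 (n - 1)) (cox_colour d n (n - 1)) (k, c) = (k, c)"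
      by (rule monomial_perm_apply_outside) (use 3 in auto)
    ultimately show ?thesis
      unfolding gamma_def x by simp
  qed
qed

lemma lin_act_gamma:
  assumes "2 \<le> d" "2 \<le> n" "k \<in> {1..n}"
  shows "lin_act d n (gamma d n) x k =
    (if k = 1 then zeta d * x (n - 1) else if k < n then x (k - 1) else zeta d ^ (d - 1) * x n)"
proof -
  define j where "j = (if k = 1 then n - 1 else if k < n then k - 1 else n)"
  have j: "j \<in> {1..n}" "shift_cycle 1 (n - 1) j = k"
    using assms by (auto simp: j_def shift_cycle_def)
  have "lin_act d n (gamma d n) x k = zeta d ^ cox_colour d n (n - 1) j * x j"
    using lin_act_monomial_perm[OF _ permutes_inj_on[OF shift_cycle_permutes[of 1 "n - 1" n]] j(1)]
      assms
    unfolding gamma_eq_monomial_perm[OF assms(1,2)] j(2)[symmetric] by simp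
  then show ?thesis
    using assms by (auto simp: j_def cox_colour_def)
qed

lemma eq_on_interval_if_steps:
  fixes f :: "nat \<Rightarrow> 'a" and a b k :: nat
  assumes "\<forall>k. a < k \<and> k \<le> b \<longrightarrow> f k = f (k - 1)" "a \<le> k" "k \<le> b"
  shows "f k = f a"
  using assms(2,3)
proof (induction k rule: dec_induct)
  case (step k)
  then show ?case
    using assms(1)[rule_format, of "Suc k"] by simp
qed simp

lemma gamma_fixed_vector_zero:
  assumes "2 \<le> d" "2 \<le> n" "\<forall>k\<in>{1..n}. lin_act d n (gamma d n) x k = x k"
  shows "\<forall>k\<in>{1..n}. x k = 0"
proof -
  have step: "\<forall>k. 1 < k \<and> k \<le> n - 1 \<longrightarrow> x k = x (k - 1)"
  proof (intro allI impI)
    fix k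
    assume "1 < k \<and> k \<le> n - 1"
    then have k: "k \<in> {1..n}" "k \<noteq> 1" "k < n"
      by auto
    show "x k = x (k - 1)"
      using assms(3)[rule_format, OF k(1)] lin_act_gamma[OF assms(1,2) k(1), of x] k by simp
  qed
  have "x 1 = lin_act d n (gamma d n) x 1"
    using assms(2,3) by auto
  also have "\<dots> = zeta d * x (n - 1)"
    using lin_act_gamma[OF assms(1,2), of 1] assms(2) by simp
  also have "x (n - 1) = x 1"
    using eq_on_interval_if_steps[OF step, of "n - 1"] assms(2) by simp
  finally have "(zeta d - 1) * x 1 = 0"
    by (simp add: algebra_simps)
  then have x1: "x 1 = 0"
    using zeta_pow_ne_1[of 1 d] assms(1) by simp
  have "x n = zeta d ^ (d - 1) * x n"
    using assms(2) assms(3)[rule_format, of n] lin_act_gamma[OF assms(1,2), of n] by simp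
  then have "(zeta d ^ (d - 1) - 1) * x n = 0"
    by (simp add: algebra_simps)
  then have xn: "x n = 0"
    using zeta_pow_ne_1[of "d - 1" d] assms(1) by simp
  show ?thesis
  proof
    fix k
    assume "k \<in> {1..n}"
    then consider "k = n" | "1 \<le> k" "k \<le> n - 1"
      by fastforce
    then show "x k = 0"
      using x1 xn eq_on_interval_if_steps[OF step, of k] by cases auto
  qed
qed

section \<open>Reduced factorizations of the Coxeter element\<close>

definition transp_chain :: "nat \<Rightarrow> nat \<Rightarrow> nat \<Rightarrow> nat \<Rightarrow> (nat \<times> nat \<Rightarrow> nat \<times> nat) list" where
  "transp_chain d n a m = map (\<lambda>j. col_transp d n j (Suc j) 0) [a..<m]"

definition cox_chain :: "nat \<Rightarrow> nat \<Rightarrow> nat \<Rightarrow> nat \<Rightarrow> nat \<Rightarrow> (nat \<times> nat \<Rightarrow> nat \<times> nat) list" where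
  "cox_chain d n s a m =
    [col_transp d n a n s, col_transp d n a n (Suc s mod d)] @ transp_chain d n a m"

lemma transp_chain_reflections:
  "0 < d \<Longrightarrow> 1 \<le> a \<Longrightarrow> m \<le> n \<Longrightarrow> set (transp_chain d n a m) \<subseteq> reflections d n"
  unfolding transp_chain_def by (auto intro!: col_transp_in_reflections)

lemma cox_chain_reflections:
  "0 < d \<Longrightarrow> s < d \<Longrightarrow> 1 \<le> a \<Longrightarrow> a < n \<Longrightarrow> m \<le> n \<Longrightarrow>
    set (cox_chain d n s a m) \<subseteq> reflections d n"
  unfolding cox_chain_def using transp_chain_reflections
  by (auto intro!: col_transp_in_reflections simp: order.strict_implies_order)

lemma foldr_transp_chain:
  assumes "0 < d" "1 \<le> a" "a \<le> m" "m \<le> n"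
  shows "foldr (\<circ>) (transp_chain d n a m) id = monomial_perm d n (shift_cycle a m) (\<lambda>k. 0)"
  using assms(3)
proof (induction m rule: dec_induct)
  case base
  then show ?case
    by (simp add: transp_chain_def shift_cycle_def monomial_perm_eq_id)
next
  case (step k)
  have maps: "\<forall>j\<in>{1..n}. transpose k (Suc k) j \<in> {1..n}"
    using step(1,2) assms(2,4) by (auto simp: transpose_def)
  have "foldr (\<circ>) (transp_chain d n a (Suc k)) id =
      foldr (\<circ>) (transp_chain d n a k) id \<circ> col_transp d n k (Suc k) 0"
    using step(1) by (simp add: transp_chain_def foldr_comp_append del: foldr_append)
  also have "\<dots> = monomial_perm d n (shift_cycle a k) (\<lambda>k. 0) \<circ> col_transp d n k (Suc k) 0"
    by (simp only: step.IH)
  also have "\<dots> = monomial_perm d n (shift_cycle a (Suc k)) (\<lambda>k. 0)"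
    unfolding col_transp_def monomial_perm_comp[OF assms(1) maps]
    by (rule monomial_perm_cong) (use step(1) in \<open>auto simp: shift_cycle_def transpose_def\<close>)
  finally show ?case .
qed

lemma col_transp_pair:
  assumes "2 \<le> d" "a \<in> {1..n}" "a \<noteq> n" "s < d"
  shows "col_transp d n a n s \<circ> col_transp d n a n (Suc s mod d) =
    monomial_perm d n (\<lambda>k. k) (cox_colour d n a)"
proof -
  have d: "0 < d"
    using assms(1) by simp
  have maps: "\<forall>k\<in>{1..n}. transpose a n k \<in> {1..n}"
    using assms(2) by (auto simp: transpose_def)
  show ?thesis
    unfolding col_transp_def monomial_perm_comp[OF d maps]
  proof (rule monomial_perm_cong, intro ballI conjI)
    fix k
    assume "k \<in> {1..n}"
    show "(transpose a n \<circ> transpose a n) k = k"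
      by simp
    show "((if k = a then Suc s mod d else if k = n then d - Suc s mod d else 0) +
        (if transpose a n k = a then s else if transpose a n k = n then d - s else 0)) mod d =
        cox_colour d n a k mod d"
      using assms by (cases "Suc s < d") (auto simp: transpose_def cox_colour_def mod_Suc)
  qed
qed

lemma foldr_cox_chain:
  assumes "2 \<le> d" "1 \<le> a" "a \<le> m" "m < n" "s < d"
  shows "foldr (\<circ>) (cox_chain d n s a m) id = monomial_perm d n (shift_cycle a m) (cox_colour d n m)"
proof -
  have d: "0 < d"
    using assms(1) by simp
  have maps: "\<forall>k\<in>{1..n}. shift_cycle a m k \<in> {1..n}"
    using permutes_in_image[OF shift_cycle_permutes] assms by auto
  have "foldr (\<circ>) (cox_chain d n s a m) id =
      (col_transp d n a n s \<circ> col_transp d n a n (Suc s mod d)) \<circ> foldr (\<circ>) (transp_chain d n a m) id"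
    by (simp add: cox_chain_def foldr_comp_append comp_assoc del: foldr_append)
  also have "\<dots> =
      monomial_perm d n (\<lambda>k. k) (cox_colour d n a) \<circ> monomial_perm d n (shift_cycle a m) (\<lambda>k. 0)"
    using assms col_transp_pair[of d a n s] foldr_transp_chain[OF d assms(2,3), of n] by simp
  also have "\<dots> = monomial_perm d n (shift_cycle a m) (cox_colour d n m)"
    unfolding monomial_perm_comp[OF d maps]
    by (rule monomial_perm_cong) (use assms in \<open>auto simp: shift_cycle_def cox_colour_def\<close>)
  finally show ?thesis .
qed

lemma col_transp_join_cycles:
  assumes "0 < d" "2 \<le> i" "i < n" "t \<le> d"
  shows "col_transp d n 1 i t \<circ> (monomial_perm d n (shift_cycle 1 (i - 1)) c \<circ>
      monomial_perm d n (shift_cycle i (n - 1)) c') =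
    monomial_perm d n (shift_cycle 1 (n - 1)) (\<lambda>k. c' k + c (shift_cycle i (n - 1) k) +
      (if k = i - 1 then t else if k = n - 1 then d - t else 0))"
proof -
  have maps: "\<forall>k\<in>{1..n}. shift_cycle a m k \<in> {1..n}" if "1 \<le> a" "a \<le> m" "m \<le> n" for a m
    using permutes_in_image[OF shift_cycle_permutes[OF that]] by blast
  have maps1: "\<forall>k\<in>{1..n}. shift_cycle i (n - 1) k \<in> {1..n}"
    using maps[of i "n - 1"] assms by auto
  have maps2: "\<forall>k\<in>{1..n}. (shift_cycle 1 (i - 1) \<circ> shift_cycle i (n - 1)) k \<in> {1..n}"
    using maps[of 1 "i - 1"] maps1 assms by auto
  show ?thesis
    unfolding monomial_perm_comp[OF assms(1) maps1] col_transp_def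
      monomial_perm_comp[OF assms(1) maps2] using assms(2,3)
  proof (intro monomial_perm_cong ballI conjI)
    fix k
    assume "k \<in> {1..n}"
    then consider "k < i - 1" | "k = i - 1" | "i \<le> k" "k < n - 1" | "k = n - 1" | "k = n"
      using assms by fastforce
    note cases = this
    show "(transpose 1 i \<circ> (shift_cycle 1 (i - 1) \<circ> shift_cycle i (n - 1))) k =
        shift_cycle 1 (n - 1) k"
      using cases assms by cases (auto simp: shift_cycle_def transpose_def)
    have "(shift_cycle 1 (i - 1) \<circ> shift_cycle i (n - 1)) k = 1 \<longleftrightarrow> k = i - 1"
      "(shift_cycle 1 (i - 1) \<circ> shift_cycle i (n - 1)) k = i \<longleftrightarrow> k = n - 1"
      using cases assms by (cases; auto simp: shift_cycle_def)+
    then show "(c' k + c (shift_cycle i (n - 1) k) +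
        (if (shift_cycle 1 (i - 1) \<circ> shift_cycle i (n - 1)) k = 1 then t
         else if (shift_cycle 1 (i - 1) \<circ> shift_cycle i (n - 1)) k = i then d - t else 0)) mod d =
        (c' k + c (shift_cycle i (n - 1) k) +
        (if k = i - 1 then t else if k = n - 1 then d - t else 0)) mod d"
      by (simp only:)
  qed
qed

lemma length_transp_chain [simp]: "length (transp_chain d n a m) = m - a"
  by (simp add: transp_chain_def)

lemma length_cox_chain [simp]: "length (cox_chain d n s a m) = m - a + 2"
  by (simp add: cox_chain_def)

lemma gamma_factorization_cox_chain:
  assumes "2 \<le> d" "2 \<le> n" "s < d"
  shows "foldr (\<circ>) (cox_chain d n s 1 (n - 1)) id = gamma d n"
  using foldr_cox_chain[of d 1 "n - 1" n s] assms by (simp add: gamma_eq_monomial_perm)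

lemma gamma_factorization_colour_zero:
  assumes "2 \<le> d" "2 \<le> i" "i < n"
  shows "foldr (\<circ>) (col_transp d n 1 i 0 # transp_chain d n 1 (i - 1) @ cox_chain d n 0 i (n - 1)) id =
    gamma d n"
proof -
  have d: "0 < d" and n: "2 \<le> n"
    using assms by simp_all
  have "foldr (\<circ>) (col_transp d n 1 i 0 # transp_chain d n 1 (i - 1) @ cox_chain d n 0 i (n - 1)) id =
      col_transp d n 1 i 0 \<circ> (foldr (\<circ>) (transp_chain d n 1 (i - 1)) id \<circ>
        foldr (\<circ>) (cox_chain d n 0 i (n - 1)) id)"
    by (simp add: foldr_comp_append del: foldr_append)
  also have "\<dots> = col_transp d n 1 i 0 \<circ> (monomial_perm d n (shift_cycle 1 (i - 1)) (\<lambda>k. 0) \<circ>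
      monomial_perm d n (shift_cycle i (n - 1)) (cox_colour d n (n - 1)))"
    using foldr_transp_chain[of d 1 "i - 1" n] foldr_cox_chain[of d i "n - 1" n 0] assms by simp
  also have "\<dots> = monomial_perm d n (shift_cycle 1 (n - 1))
      (\<lambda>k. cox_colour d n (n - 1) k + 0 + (if k = i - 1 then 0 else if k = n - 1 then d - 0 else 0))"
    by (rule col_transp_join_cycles[OF d assms(2,3)]) simp
  also have "\<dots> = gamma d n"
    unfolding gamma_eq_monomial_perm[OF assms(1) n] using assms
    by (intro monomial_perm_cong) (auto simp: cox_colour_def mod_Suc)
  finally show ?thesis .
qed

lemma gamma_factorization_colour_last:
  assumes "2 \<le> d" "2 \<le> i" "i < n"
  shows "foldr (\<circ>)
      (col_transp d n 1 i (d - 1) # cox_chain d n 0 1 (i - 1) @ transp_chain d n i (n - 1)) id =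
    gamma d n"
proof -
  have d: "0 < d" and n: "2 \<le> n"
    using assms by simp_all
  have "foldr (\<circ>)
      (col_transp d n 1 i (d - 1) # cox_chain d n 0 1 (i - 1) @ transp_chain d n i (n - 1)) id =
      col_transp d n 1 i (d - 1) \<circ> (foldr (\<circ>) (cox_chain d n 0 1 (i - 1)) id \<circ>
        foldr (\<circ>) (transp_chain d n i (n - 1)) id)"
    by (simp add: foldr_comp_append del: foldr_append)
  also have "\<dots> = col_transp d n 1 i (d - 1) \<circ>
      (monomial_perm d n (shift_cycle 1 (i - 1)) (cox_colour d n (i - 1)) \<circ>
       monomial_perm d n (shift_cycle i (n - 1)) (\<lambda>k. 0))"
    using foldr_transp_chain[of d i "n - 1" n] foldr_cox_chain[of d 1 "i - 1" n 0] assms by simp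
  also have "\<dots> = monomial_perm d n (shift_cycle 1 (n - 1))
      (\<lambda>k. 0 + cox_colour d n (i - 1) (shift_cycle i (n - 1) k) +
        (if k = i - 1 then d - 1 else if k = n - 1 then d - (d - 1) else 0))"
    by (rule col_transp_join_cycles[OF d assms(2,3)]) simp
  also have "\<dots> = gamma d n"
    unfolding gamma_eq_monomial_perm[OF assms(1) n]
  proof (intro monomial_perm_cong ballI conjI refl)
    fix k
    assume "k \<in> {1..n}"
    then consider "k < i - 1" | "k = i - 1" | "i \<le> k" "k < n - 1" | "k = n - 1" | "k = n"
      using assms by fastforce
    then show "(0 + cox_colour d n (i - 1) (shift_cycle i (n - 1) k) +
        (if k = i - 1 then d - 1 else if k = n - 1 then d - (d - 1) else 0)) mod d =
        cox_colour d n (n - 1) k mod d"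
      using assms by cases (auto simp: cox_colour_def shift_cycle_def)
  qed
  finally show ?thesis .
qed

lemma gamma_in_Gddn:
  assumes "2 \<le> d" "2 \<le> n"
  shows "gamma d n \<in> Gddn d n"
  using gamma_factorization_cox_chain[OF assms, of 0]
    foldr_comp_in_Gddn[of d "cox_chain d n 0 1 (n - 1)" n] cox_chain_reflections[of d 0 1 n "n - 1"]
    reflections_subset_Gddn assms
  by auto

lemma abs_len_gamma:
  assumes "2 \<le> d" "2 \<le> n"
  shows "abs_len d n (gamma d n) = n"
proof -
  have d: "0 < d"
    using assms(1) by simp
  have "abs_len d n (gamma d n) \<le> length (cox_chain d n 0 1 (n - 1))"
    using gamma_factorization_cox_chain[OF assms, of 0] cox_chain_reflections[of d 0 1 n "n - 1"] assms
    by (intro abs_len_le) auto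
  then have le: "abs_len d n (gamma d n) \<le> n"
    using assms(2) by simp
  obtain ts where ts: "length ts = abs_len d n (gamma d n)" "set ts \<subseteq> reflections d n"
    "foldr (\<circ>) ts id = gamma d n"
    using abs_len_obtain[OF d gamma_in_Gddn[OF assms]] .
  have "length ts = n"
    using factorization_forms_independent[OF d ts(2)] gamma_fixed_vector_zero[OF assms] ts(1,3) le
    by auto
  then show ?thesis
    using ts(1) by simp
qed

lemma gamma_factorization_forms_independent:
  assumes "2 \<le> d" "2 \<le> n" "set ts \<subseteq> reflections d n" "length ts = n"
    "foldr (\<circ>) ts id = gamma d n"
  shows "\<exists>z. \<forall>j<length ts. refl_form d n (ts ! j) z = r j"
proof -
  have "length ts = n \<and> (\<forall>r. \<exists>z. \<forall>j<length ts. refl_form d n (ts ! j) z = r j)"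
  proof (rule factorization_forms_independent[OF _ assms(3)])
    fix x
    assume "\<forall>k\<in>{1..n}. lin_act d n (foldr (\<circ>) ts id) x k = x k"
    then show "\<forall>k\<in>{1..n}. x k = 0"
      unfolding assms(5) by (rule gamma_fixed_vector_zero[OF assms(1,2)])
  qed (use assms in simp_all)
  then show ?thesis
    by blast
qed

section \<open>Noncrossing elements and the sets \<open>Rset\<close>\<close>

lemma prefix_in_NC:
  assumes "2 \<le> d" "2 \<le> n" "set (us @ ws) \<subseteq> reflections d n" "length (us @ ws) = n"
    "foldr (\<circ>) (us @ ws) id = gamma d n"
  shows "foldr (\<circ>) us id \<in> NC d n"
proof -
  have d: "0 < d"
    using assms(1) by simp
  let ?u = "foldr (\<circ>) us id" and ?w = "foldr (\<circ>) ws id"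
  have refl: "set us \<subseteq> reflections d n" "set ws \<subseteq> reflections d n"
    using assms(3) by auto
  then have G: "?u \<in> Gddn d n" "?w \<in> Gddn d n"
    using reflections_subset_Gddn[of d n] by (auto intro!: foldr_comp_in_Gddn[OF d])
  have gamma: "gamma d n = ?u \<circ> ?w"
    using assms(5) by (simp add: foldr_comp_append del: foldr_append)
  have w: "ginv d n ?u \<circ> gamma d n = ?w"
    unfolding gamma using ginv_Gddn(2)[OF d G(1)] by (simp add: comp_assoc[symmetric])
  have "n \<le> abs_len d n ?u + abs_len d n ?w"
    using abs_len_comp_le[OF d G] abs_len_gamma[OF assms(1,2)] gamma by simp
  moreover have "abs_len d n ?u \<le> length us" "abs_len d n ?w \<le> length ws"
    using abs_len_le refl by blast+
  ultimately have "abs_len d n (gamma d n) = abs_len d n ?u + abs_len d n (ginv d n ?u \<circ> gamma d n)"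
    using assms(4) abs_len_gamma[OF assms(1,2)] unfolding w by simp
  then show ?thesis
    using G(1) by (simp add: NC_def abs_le_def abs_len_id ginv_eq[OF id_in_Gddn id_in_Gddn])
qed

lemma Rset_nonempty_if_prefix:
  assumes "2 \<le> d" "2 \<le> n" "set ts \<subseteq> reflections d n" "length ts = n"
    "foldr (\<circ>) ts id = gamma d n" "foldr (\<circ>) (take k ts) id (1, 0) = (i, s)"
  shows "Rset d n i s \<noteq> {}"
  using prefix_in_NC[OF assms(1,2), of "take k ts" "drop k ts"] assms(3-6) unfolding Rset_def by auto

lemma Rset_nonempty:
  assumes "2 \<le> d" "2 \<le> n" "i \<in> {1..n}" "s < d"
    and allowed: "\<not> ((i = 1 \<and> 2 \<le> s) \<or> (2 \<le> i \<and> i < n \<and> 1 \<le> s \<and> s < d - 1))"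
  shows "Rset d n i s \<noteq> {}"
proof -
  have d: "0 < d"
    using assms(1) by simp
  have cox: "set (cox_chain d n t 1 (n - 1)) \<subseteq> reflections d n"
    "length (cox_chain d n t 1 (n - 1)) = n" "foldr (\<circ>) (cox_chain d n t 1 (n - 1)) id = gamma d n"
    if "t < d" for t
    using cox_chain_reflections[OF d that, of 1 n "n - 1"]
      gamma_factorization_cox_chain[OF assms(1,2) that] assms(2) by simp_all
  have transp: "col_transp d n 1 b t \<in> reflections d n" "col_transp d n 1 b t (1, 0) = (b, t)"
    if "b \<in> {1..n}" "b \<noteq> 1" "t < d" for b t
    using col_transp_in_reflections[OF d _ that(1)] col_transp_swaps(1)[OF d _ that(1)] that assms(2)
    by simp_all
  have "i = 1 \<or> i = n \<or> 2 \<le> i \<and> i < n"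
    using assms(3) by auto
  moreover have "s = 0 \<or> s = 1" if "i = 1"
    using allowed that by auto
  moreover have "s = 0 \<or> s = d - 1" if "2 \<le> i" "i < n"
    using allowed that assms(4) by auto
  ultimately consider "i = 1" "s = 0" | "i = 1" "s = 1" | "i = n" | "2 \<le> i" "i < n" "s = 0"
    | "2 \<le> i" "i < n" "s = d - 1"
    by metis
  then show ?thesis
  proof cases
    case 1
    then show ?thesis
      using Rset_nonempty_if_prefix[OF assms(1,2) cox[OF d], of 0] by simp
  next
    case 2
    have "col_transp d n 1 n 0 (col_transp d n 1 n 1 (1, 0)) = (1, 1)"
      using assms(1,2) by (simp add: col_transp_def mod_Suc)
    then show ?thesis
      using 2 Rset_nonempty_if_prefix[OF assms(1,2) cox[OF d], of 2] assms(1)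
      by (simp add: cox_chain_def)
  next
    case 3
    then show ?thesis
      using Rset_nonempty_if_prefix[OF assms(1,2) cox[OF assms(4)], of 1] transp(2)[of n s] assms(2,4)
      by (simp add: cox_chain_def)
  next
    case 4
    then show ?thesis
      using Rset_nonempty_if_prefix[OF assms(1,2) _ _
          gamma_factorization_colour_zero[OF assms(1) 4(1,2)], of 1] transp[of i 0] d transp_chain_reflections[OF d, of 1 "i - 1" n]
        cox_chain_reflections[OF d d, of i n "n - 1"]
      by simp
  next
    case 5
    then show ?thesis
      using Rset_nonempty_if_prefix[OF assms(1,2) _ _
          gamma_factorization_colour_last[OF assms(1) 5(1,2)], of 1] transp[of i "d - 1"] d transp_chain_reflections[OF d, of i "n - 1" n]
        cox_chain_reflections[OF d d, of 1 n "i - 1"]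
      by simp
  qed
qed

lemma NC_reduced_factorization:
  assumes "2 \<le> d" "2 \<le> n" "u \<in> NC d n"
  obtains us ws where "set (us @ ws) \<subseteq> reflections d n" "length (us @ ws) = n"
    "foldr (\<circ>) us id = u" "foldr (\<circ>) ws id = ginv d n u \<circ> gamma d n"
proof -
  have d: "0 < d"
    using assms(1) by simp
  have uG: "u \<in> Gddn d n"
    and len: "abs_len d n (gamma d n) = abs_len d n u + abs_len d n (ginv d n u \<circ> gamma d n)"
    using assms(3) by (auto simp: NC_def abs_le_def)
  have "ginv d n u \<circ> gamma d n \<in> Gddn d n"
    by (rule Gddn_comp[OF d ginv_Gddn(1)[OF d uG] gamma_in_Gddn[OF assms(1,2)]])
  then obtain ws where ws: "length ws = abs_len d n (ginv d n u \<circ> gamma d n)"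
    "set ws \<subseteq> reflections d n" "foldr (\<circ>) ws id = ginv d n u \<circ> gamma d n"
    using abs_len_obtain[OF d] by blast
  obtain us where "length us = abs_len d n u" "set us \<subseteq> reflections d n" "foldr (\<circ>) us id = u"
    using abs_len_obtain[OF d uG] .
  then show ?thesis
    using that[of us ws] ws len abs_len_gamma[OF assms(1,2)] by simp
qed

text \<open>Prescribing the forms of a reduced factorization \<open>\<gamma> = u (u\<^sup>-\<^sup>1\<gamma>)\<close> separately on
  the two factors splits every vector as \<open>z + y\<close> with \<open>u z = z\<close> and \<open>u\<^sup>-\<^sup>1\<gamma> y = y\<close>.\<close>

lemma NC_split_vector:
  assumes "2 \<le> d" "2 \<le> n" "u \<in> NC d n"
  obtains z where "\<forall>k\<in>{1..n}. lin_act d n u z k = z k"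
    "\<forall>k\<in>{1..n}. lin_act d n u (\<lambda>j. x j - z j) k = lin_act d n (gamma d n) (\<lambda>j. x j - z j) k"
proof -
  have d: "0 < d"
    using assms(1) by simp
  obtain us ws where ts: "set (us @ ws) \<subseteq> reflections d n" "length (us @ ws) = n"
    and us: "foldr (\<circ>) us id = u" and ws: "foldr (\<circ>) ws id = ginv d n u \<circ> gamma d n"
    using NC_reduced_factorization[OF assms] .
  have uG: "u \<in> Gddn d n"
    using assms(3) by (simp add: NC_def)
  have "u \<circ> (ginv d n u \<circ> gamma d n) = (u \<circ> ginv d n u) \<circ> gamma d n"
    by (simp add: comp_assoc)
  then have uw: "u \<circ> (ginv d n u \<circ> gamma d n) = gamma d n"
    by (simp only: ginv_Gddn(3)[OF d uG] id_comp)
  have "foldr (\<circ>) (us @ ws) id = gamma d n"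
    by (simp only: foldr_comp_append us ws uw)
  from gamma_factorization_forms_independent[OF assms(1,2) ts this,
      of "\<lambda>j. if j < length us then 0 else refl_form d n ((us @ ws) ! j) x"]
  obtain z where z: "\<forall>j<length (us @ ws). refl_form d n ((us @ ws) ! j) z =
      (if j < length us then 0 else refl_form d n ((us @ ws) ! j) x)" ..
  have "\<forall>t\<in>set us. refl_form d n t z = 0"
  proof
    fix t
    assume "t \<in> set us"
    then obtain j where "j < length us" "t = us ! j"
      by (auto simp: in_set_conv_nth)
    then show "refl_form d n t z = 0"
      using z[rule_format, of j] by (simp add: nth_append)
  qed
  then have fix_u: "\<forall>k\<in>{1..n}. lin_act d n u z k = z k"
    using lin_act_foldr_fixed[OF d] ts(1) us by auto
  have "\<forall>t\<in>set ws. refl_form d n t (\<lambda>j. x j - z j) = 0"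
  proof
    fix t
    assume "t \<in> set ws"
    then obtain j where "j < length ws" "t = ws ! j"
      by (auto simp: in_set_conv_nth)
    then show "refl_form d n t (\<lambda>j. x j - z j) = 0"
      using z[rule_format, of "length us + j"] by (simp add: refl_form_diff nth_append)
  qed
  then have fix_ws: "lin_act d n (foldr (\<circ>) ws id) (\<lambda>j. x j - z j) k = x k - z k"
    if "k \<in> {1..n}" for k
    using lin_act_foldr_fixed[OF d _ _ that] ts(1) by simp
  have fix_w: "lin_act d n (ginv d n u \<circ> gamma d n) (\<lambda>j. x j - z j) k = x k - z k"
    if "k \<in> {1..n}" for k
    using fix_ws[OF that] unfolding ws .
  have wG: "ginv d n u \<circ> gamma d n \<in> Gddn d n"
    by (rule Gddn_comp[OF d ginv_Gddn(1)[OF d uG] gamma_in_Gddn[OF assms(1,2)]])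
  have "lin_act d n (gamma d n) (\<lambda>j. x j - z j) k = lin_act d n u (\<lambda>j. x j - z j) k"
    if "k \<in> {1..n}" for k
  proof -
    have "lin_act d n (gamma d n) (\<lambda>j. x j - z j) k =
        lin_act d n u (lin_act d n (ginv d n u \<circ> gamma d n) (\<lambda>j. x j - z j)) k"
      using lin_act_comp[OF d uG wG that] uw by simp
    also have "\<dots> = lin_act d n u (\<lambda>j. x j - z j) k"
      by (rule lin_act_cong) (simp add: fix_w)
    finally show ?thesis .
  qed
  then show ?thesis
    using that fix_u by simp
qed

lemma lin_act_unit_vector:
  assumes "j \<in> {1..n}"
  shows "lin_act d n u (\<lambda>k. if k = j then 1 else 0) i = gmat d u i j"
proof -
  have "lin_act d n u (\<lambda>k. if k = j then 1 else 0) i =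
      (\<Sum>k\<in>{1..n}. if k = j then gmat d u i k else 0)"
    unfolding lin_act_def by (rule sum.cong) auto
  then show ?thesis
    using assms by simp
qed

lemma fixed_vector_monomial:
  assumes "0 < d" "u \<in> Gddn d n" "j \<in> {1..n}" "u (j, 0) = (i, s)"
    and fixed: "\<forall>k\<in>{1..n}. lin_act d n u z k = z k"
  shows "z i = zeta d ^ s * z j"
proof -
  obtain \<sigma> c where \<sigma>: "\<sigma> permutes {1..n}" "u = monomial_perm d n \<sigma> c"
    using assms(2) by (rule GddnE)
  have i: "\<sigma> j = i" "c j mod d = s" "i \<in> {1..n}"
    using assms(1,3,4) permutes_in_image[OF \<sigma>(1), of j] by (auto simp: \<sigma>(2))
  have "z i = lin_act d n u z (\<sigma> j)"
    using fixed i by simp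
  also have "\<dots> = zeta d ^ c j * z j"
    unfolding \<sigma>(2) by (rule lin_act_monomial_perm[OF assms(1) permutes_inj_on[OF \<sigma>(1)] assms(3)])
  also have "zeta d ^ c j = zeta d ^ s"
    using zeta_pow_mod[OF assms(1), of "c j"] i(2) by simp
  finally show ?thesis .
qed

lemma Rset_coordinate_equations:
  assumes "2 \<le> d" "2 \<le> n" "u \<in> Rset d n i s"
  obtains y :: "nat \<Rightarrow> complex" where
    "\<And>k. 2 \<le> k \<Longrightarrow> k < n \<Longrightarrow> (if k = i then zeta d ^ s else 0) = y (k - 1) - y k"
    "(if i = 1 then zeta d ^ s else 0) = zeta d * y (n - 1) + 1 - y 1"
    "(if i = 1 then 1 else 0) - y i = zeta d ^ s * (1 - y 1)"
proof -
  have d: "0 < d"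
    using assms(1) by simp
  have uN: "u \<in> NC d n" and u1: "u (1, 0) = (i, s)"
    using assms(3) by (auto simp: Rset_def)
  define e where "e k = (if k = 1 then 1 else 0 :: complex)" for k :: nat
  obtain z where fix_u: "\<forall>k\<in>{1..n}. lin_act d n u z k = z k"
    and split: "\<forall>k\<in>{1..n}.
      lin_act d n u (\<lambda>j. e j - z j) k = lin_act d n (gamma d n) (\<lambda>j. e j - z j) k"
    using NC_split_vector[OF assms(1,2) uN] .
  define y where "y k = e k - z k" for k :: nat
  have key: "(if k = i then zeta d ^ s else 0) = lin_act d n (gamma d n) y k + e k - y k"
    if "k \<in> {1..n}" for k
  proof -
    have "(if k = i then zeta d ^ s else 0) = lin_act d n u e k"
      using lin_act_unit_vector[of 1 n d u k] u1 assms(2) by (simp add: e_def[abs_def] gmat_def)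
    also have "\<dots> = lin_act d n u y k + lin_act d n u z k"
      using lin_act_add[of d n u y z k] by (simp add: y_def)
    also have "\<dots> = lin_act d n (gamma d n) y k + z k"
      using split[rule_format, OF that] fix_u[rule_format, OF that] unfolding y_def[abs_def] by simp
    finally show ?thesis
      by (simp add: y_def)
  qed
  have "z i = zeta d ^ s * z 1"
    using fixed_vector_monomial[OF d _ _ u1 fix_u] uN assms(2) by (simp add: NC_def)
  then have "(if i = 1 then 1 else 0) - y i = zeta d ^ s * (1 - y 1)"
    by (simp add: y_def e_def)
  moreover have "(if k = i then zeta d ^ s else 0) = y (k - 1) - y k" if "2 \<le> k" "k < n" for k
    using key[of k] lin_act_gamma[OF assms(1,2), of k y] that by (simp add: e_def)
  moreover have "(if i = 1 then zeta d ^ s else 0) = zeta d * y (n - 1) + 1 - y 1"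
    using key[of 1] lin_act_gamma[OF assms(1,2), of 1 y] assms(2)
    by (cases "i = 1") (simp_all add: e_def)
  ultimately show ?thesis
    using that by blast
qed

lemma coordinate_equations_unsolvable_first:
  fixes y :: "nat \<Rightarrow> complex"
  assumes "2 \<le> n" "2 \<le> s" "s < d"
    and "\<And>k. 2 \<le> k \<Longrightarrow> k < n \<Longrightarrow> y (k - 1) = y k"
    and "zeta d ^ s = zeta d * y (n - 1) + 1 - y 1"
    and "1 - y 1 = zeta d ^ s * (1 - y 1)"
  shows False
proof -
  have "y (n - 1) = y 1"
    using eq_on_interval_if_steps[of 1 "n - 1" y "n - 1"] assms(1,4) by fastforce
  have "(zeta d ^ s - 1) * (1 - y 1) = 0"
    using assms(6) by (simp add: algebra_simps)
  then have "y 1 = 1"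
    using zeta_pow_ne_1[of s d] assms(2,3) by simp
  then have "zeta d ^ s = zeta d ^ 1"
    using assms(5) \<open>y (n - 1) = y 1\<close> by simp
  then show False
    using zeta_pow_inj[of s d 1] assms(2,3) by simp
qed

lemma coordinate_equations_unsolvable_middle:
  fixes y :: "nat \<Rightarrow> complex"
  assumes "2 \<le> i" "i < n" "1 \<le> s" "s < d - 1"
    and steps: "\<And>k. 2 \<le> k \<Longrightarrow> k < n \<Longrightarrow> (if k = i then zeta d ^ s else 0) = y (k - 1) - y k"
    and "0 = zeta d * y (n - 1) + 1 - y 1"
    and "- y i = zeta d ^ s * (1 - y 1)"
  shows False
proof -
  have "y (i - 1) = y 1"
  proof (rule eq_on_interval_if_steps)
    show "\<forall>k. 1 < k \<and> k \<le> i - 1 \<longrightarrow> y k = y (k - 1)"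
    proof (intro allI impI)
      fix k
      assume "1 < k \<and> k \<le> i - 1"
      then have "2 \<le> k" "k < n" "k \<noteq> i"
        using assms(2) by auto
      then show "y k = y (k - 1)"
        using steps[of k] by simp
    qed
  qed (use assms(1) in simp_all)
  then have yi: "y i = y 1 - zeta d ^ s"
    using steps[of i] assms(1,2) by simp
  have "y (n - 1) = y i"
  proof (rule eq_on_interval_if_steps)
    show "\<forall>k. i < k \<and> k \<le> n - 1 \<longrightarrow> y k = y (k - 1)"
    proof (intro allI impI)
      fix k
      assume "i < k \<and> k \<le> n - 1"
      then have "2 \<le> k" "k < n" "k \<noteq> i"
        using assms(1) by auto
      then show "y k = y (k - 1)"
        using steps[of k] by simp
    qed
  qed (use assms(2) in simp_all)
  have "y 1 * (zeta d ^ s - 1) = 0"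
    using assms(7) yi by (simp add: algebra_simps)
  then have "y 1 = 0"
    using zeta_pow_ne_1[of s d] assms(3,4) by simp
  then have "zeta d ^ Suc s = 1"
    using assms(6) yi \<open>y (n - 1) = y i\<close> by (simp add: algebra_simps)
  moreover have "Suc s < d"
    using assms(4) by simp
  ultimately show False
    using zeta_pow_ne_1[of "Suc s" d] by blast
qed

lemma Rset_empty:
  assumes "2 \<le> d" "2 \<le> n"
    and forbidden: "(i = 1 \<and> 2 \<le> s \<and> s < d) \<or> (2 \<le> i \<and> i < n \<and> 1 \<le> s \<and> s < d - 1)"
  shows "Rset d n i s = {}"
proof (rule ccontr)
  assume "Rset d n i s \<noteq> {}"
  then obtain u where "u \<in> Rset d n i s"
    by blast
  then obtain y :: "nat \<Rightarrow> complex" where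
    steps: "\<And>k. 2 \<le> k \<Longrightarrow> k < n \<Longrightarrow> (if k = i then zeta d ^ s else 0) = y (k - 1) - y k"
    and first: "(if i = 1 then zeta d ^ s else 0) = zeta d * y (n - 1) + 1 - y 1"
    and image: "(if i = 1 then 1 else 0) - y i = zeta d ^ s * (1 - y 1)"
    using Rset_coordinate_equations[OF assms(1,2)] by metis
  from forbidden show False
  proof
    assume "i = 1 \<and> 2 \<le> s \<and> s < d"
    then show False
      using coordinate_equations_unsolvable_first[of n s d y] assms(2) steps first image by fastforce
  next
    assume "2 \<le> i \<and> i < n \<and> 1 \<le> s \<and> s < d - 1"
    then show False
      using coordinate_equations_unsolvable_middle[of i n s d y] steps first image by fastforce
  qed
qed

theorem lemma3p8:
  fixes d n i s :: nat
  assumes "d \<ge> 2" and "n \<ge> 2" and "i \<in> {1..n}" and "s < d"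
  shows "Rset d n i s = {} \<longleftrightarrow>
           ((i = 1 \<and> 2 \<le> s \<and> s < d) \<or> (2 \<le> i \<and> i < n \<and> 1 \<le> s \<and> s < d - 1))"
  using Rset_empty[OF assms(1,2)] Rset_nonempty[OF assms] assms(4) by blast

end
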